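(* Let $k$ be a natural number. For all $n\geq 2^{k-1}k(2k-1)$, $$B_k^e(n)-B_k^o(n)=C_k^e(n+1)-C_k^o(n+1)=\tfrac12 D_{2k}(n+1).$$
   Context: All partitions are of positive integers into positive parts unless stated otherwise. $B_k^e(n)$ (resp. $B_k^o(n)$) is the number of partitions of $n$ having at least one odd part, with largest odd part $2\ell-1$, in which every part is odd except for at most $k-1$ even parts. These even parts are pairwise distinct, lie in $[2\ell+2,\,2\ell+2k-2]$, and their number is even (resp. odd). $C_k^e(n)$ (resp. $C_k^o(n)$) is the number of pairs $(\lambda,\ell)$ with $\ell\ge1$ and $\lambda$ a partition of $n$ satisfying three conditions: - $\lambda$ contains the part $2\ell$; - the parts of $\lambda$ not exceeding $\ell$ are pairwise distinct, while parts in $(\ell,2\ell]$ are unrestricted; - the parts larger than $2\ell$ are at most $k-1$ pairwise distinct even parts in $[2\ell+2,\,2\ell+2k-2]$, and their number is even (resp. odd). Equivalently, a partition admitting several choices of $\ell$ is counted once per choice, matching the generating function $\sum_{\ell\ge1}\frac{(-q;q)_\ell(\mp q^{2\ell+2};q^2)_{k-1}}{(q^{\ell+1};q)_\ell}q^{2\ell}$ for $C^e\pm C^o$. $D_j(n)$ is the number of partitions of $n$ into non-negative parts (the part $0$ is allowed) in which the smallest part appears exactly $j$ times and no other part is repeated. The convention is $D_j(0)=1$, and the generating function is $\sum_{n\ge0}D_j(n)q^n=\sum_{m\ge0}q^{mj}(-q^{m+1};q)_\infty$, where $(a;q)_N=\prod_{i=0}^{N-1}(1-aq^i)$. *)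

theory Defs
  imports Main "HOL-Library.Multiset"
begin

definition is_partition :: "nat multiset \<Rightarrow> nat \<Rightarrow> bool" where
  "is_partition p n \<longleftrightarrow> (\<forall>x\<in>#p. 0 < x) \<and> sum_mset p = n"

text \<open>Partitions counted by B_k^e (ev = True) resp. B_k^o (ev = False).
  The largest odd part is 2l-1, i.e. l = (largest odd part + 1) div 2.\<close>
definition B_set :: "nat \<Rightarrow> bool \<Rightarrow> nat \<Rightarrow> nat multiset set" where
  "B_set k ev n = {p. is_partition p n \<and> (\<exists>x\<in>#p. odd x) \<and>
     (let l = (Max {x. x \<in># p \<and> odd x} + 1) div 2 in
        \<forall>x\<in>#p. even x \<longrightarrow>
          (count p x = 1 \<and> 2*l + 2 \<le> x \<and> x \<le> 2*l + 2*k - 2)) \<and>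
     (even (size (filter_mset even p)) \<longleftrightarrow> ev)}"

definition B_e :: "nat \<Rightarrow> nat \<Rightarrow> nat" where "B_e k n = card (B_set k True n)"
definition B_o :: "nat \<Rightarrow> nat \<Rightarrow> nat" where "B_o k n = card (B_set k False n)"

definition C_set :: "nat \<Rightarrow> bool \<Rightarrow> nat \<Rightarrow> (nat multiset \<times> nat) set" where
  "C_set k ev n = {(p, l). 1 \<le> l \<and> is_partition p n \<and> 2*l \<in># p \<and>
     (\<forall>x\<in>#p. x \<le> l \<longrightarrow> count p x = 1) \<and>
     (\<forall>x\<in>#p. 2*l < x \<longrightarrow>
        (even x \<and> count p x = 1 \<and> 2*l + 2 \<le> x \<and> x \<le> 2*l + 2*k - 2)) \<and>
     (even (size (filter_mset (\<lambda>x. 2*l < x) p)) \<longleftrightarrow> ev)}"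

definition C_e :: "nat \<Rightarrow> nat \<Rightarrow> nat" where "C_e k n = card (C_set k True n)"
definition C_o :: "nat \<Rightarrow> nat \<Rightarrow> nat" where "C_o k n = card (C_set k False n)"

text \<open>Partitions of n into non-negative parts (0 allowed) where the smallest part
  appears exactly j times and no other part is repeated. For n = 0 (and j > 0) the
  only such partition is j copies of 0, matching D_j(0) = 1.\<close>
definition D_set :: "nat \<Rightarrow> nat \<Rightarrow> nat multiset set" where
  "D_set j n = {p. p \<noteq> {#} \<and> sum_mset p = n \<and>
     count p (Min (set_mset p)) = j \<and>
     (\<forall>x\<in>#p. x \<noteq> Min (set_mset p) \<longrightarrow> count p x = 1)}"

definition D :: "nat \<Rightarrow> nat \<Rightarrow> nat" where "D j n = card (D_set j n)"

end

theory Submission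
  imports Defs "HOL-Computational_Algebra.Formal_Power_Series"
begin

text \<open>
  Weighting the multiplicity of every admissible part turns each of the signed counts into a
  coefficient of a product of elementary series. Grouping by \<open>l\<close>, both \<open>B_k^e(n) - B_k^o(n)\<close> and
  \<open>C_k^e(n+1) - C_k^o(n+1)\<close> become the coefficient of \<open>q^(n+1)\<close> in
  \<open>\<Sum>_l q^(2l) (q^(2l+2);q^2)_(k-1) / (q;q^2)_l\<close>, which is the first equation, while \<open>D_j(N)\<close> is
  the coefficient of \<open>q^N\<close> in \<open>\<Sum>_m q^(jm) (-q^(m+1);q)_(N-m)\<close>.
  Recurrences in \<open>k\<close> for both series, together with the truncated Euler identity
  \<open>(-q;q)_L = 1/(q;q^2)_L mod q^(L+1)\<close>, show that twice the first series minus the second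
  (with \<open>j = 2k\<close>, both truncated at \<open>L\<close>) is congruent modulo \<open>q^(L+1)\<close> to a polynomial of degree
  \<open>k(2k-1)\<close> that does not depend on \<open>L\<close>. Comparing coefficients of \<open>q^N\<close> for \<open>N > k(2k-1)\<close> gives
  the second equation; the bound \<open>2^(k-1) k(2k-1)\<close> of the statement is only used through
  \<open>n + 1 > k(2k-1)\<close>.
\<close>

unbundle fps_syntax

section \<open>Weighted counting of partitions with parts from a finite set\<close>

lemma member_le_sum_mset: "x \<in># M \<Longrightarrow> x \<le> sum_mset (M :: 'a::canonically_ordered_monoid_add multiset)"
  by (metis le_iff_add multi_member_split sum_mset.add_mset)

lemma prod_of_bool: "finite A \<Longrightarrow> (\<Prod>a\<in>A. of_bool (P a) :: 'a::comm_semiring_1) = of_bool (\<forall>a\<in>A. P a)"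
  by (induction A rule: finite_induct) auto

definition partitions_from :: "nat set \<Rightarrow> nat \<Rightarrow> nat multiset set" where
  "partitions_from A N = {p. set_mset p \<subseteq> A \<and> sum_mset p = N}"

text \<open>The series \<open>\<Sum>c. w c * X^(a*c)\<close>: a part \<open>a\<close> occurring \<open>c\<close> times is weighted
  by \<open>w c\<close>.\<close>
definition weight_series :: "(nat \<Rightarrow> 'a::zero) \<Rightarrow> nat \<Rightarrow> 'a fps" where
  "weight_series w a = Abs_fps (\<lambda>t. if a dvd t then w (t div a) else 0)"

lemma partitions_from_empty: "partitions_from {} N = (if N = 0 then {{#}} else {})"
  by (auto simp: partitions_from_def)

lemma partitions_from_insert:
  assumes "a \<notin> A" "0 < a"
  shows "partitions_from (insert a A) N =
    (\<lambda>(c, r). replicate_mset c a + r) ` (SIGMA c:{..N div a}. partitions_from A (N - a * c))"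
proof (intro set_eqI iffI)
  fix p assume p: "p \<in> partitions_from (insert a A) N"
  define c where "c = count p a"
  define r where "r = filter_mset (\<lambda>x. x \<noteq> a) p"
  have p_eq: "p = replicate_mset c a + r"
    unfolding c_def r_def by (rule multiset_eqI) (auto simp: count_filter_mset)
  then have "a * c + sum_mset r = N"
    using p by (simp add: partitions_from_def mult.commute)
  then have "c \<le> N div a" "sum_mset r = N - a * c"
    using assms(2) by (auto simp: less_eq_div_iff_mult_less_eq mult.commute)
  moreover have "set_mset r \<subseteq> A"
    using p by (auto simp: partitions_from_def r_def)
  ultimately show "p \<in> (\<lambda>(c, r). replicate_mset c a + r) ` (SIGMA c:{..N div a}. partitions_from A (N - a * c))"
    using p_eq by (auto simp: partitions_from_def intro!: image_eqI[where x = "(c, r)"])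
next
  fix p assume "p \<in> (\<lambda>(c, r). replicate_mset c a + r) ` (SIGMA c:{..N div a}. partitions_from A (N - a * c))"
  then obtain c r where "p = replicate_mset c a + r" "c \<le> N div a" "r \<in> partitions_from A (N - a * c)"
    by auto
  moreover have "a * c \<le> N"
    using \<open>c \<le> N div a\<close> assms(2) by (simp add: less_eq_div_iff_mult_less_eq mult.commute)
  ultimately show "p \<in> partitions_from (insert a A) N"
    by (auto simp: partitions_from_def)
qed

lemma inj_on_partitions_from_insert:
  assumes "a \<notin> A"
  shows "inj_on (\<lambda>(c, r). replicate_mset c a + r) (SIGMA c:C. partitions_from A (M c))"
proof (rule inj_onI, clarsimp)
  fix c r c' r'
  assume "r \<in> partitions_from A (M c)" "r' \<in> partitions_from A (M c')"
    and eq: "replicate_mset c a + r = replicate_mset c' a + r'"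
  then have "a \<notin># r" "a \<notin># r'"
    using assms by (auto simp: partitions_from_def)
  then have "c = c'"
    using arg_cong[OF eq, of "\<lambda>p. count p a"] by (simp add: not_in_iff)
  with eq show "c = c' \<and> r = r'" by simp
qed

lemma finite_partitions_from: "finite A \<Longrightarrow> 0 \<notin> A \<Longrightarrow> finite (partitions_from A N)"
proof (induction A arbitrary: N rule: finite_induct)
  case empty
  then show ?case by (simp add: partitions_from_empty)
next
  case (insert a A)
  then show ?case by (subst partitions_from_insert) auto
qed

lemma weight_series_mult_nth:
  fixes w :: "nat \<Rightarrow> 'a::comm_semiring_1"
  assumes "0 < a"
  shows "(weight_series w a * f) $ N = (\<Sum>c\<le>N div a. w c * f $ (N - a * c))"
proof -
  have "(weight_series w a * f) $ N = (\<Sum>t\<in>{t\<in>{0..N}. a dvd t}. weight_series w a $ t * f $ (N - t))"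
    unfolding fps_mult_nth by (rule sum.mono_neutral_right) (auto simp: weight_series_def)
  also have "{t\<in>{0..N}. a dvd t} = (\<lambda>c. a * c) ` {..N div a}"
    using assms by (auto simp: less_eq_div_iff_mult_less_eq mult.commute)
  also have "(\<Sum>t\<in>(\<lambda>c. a * c) ` {..N div a}. weight_series w a $ t * f $ (N - t))
      = (\<Sum>c\<le>N div a. w c * f $ (N - a * c))"
    using assms by (subst sum.reindex) (auto simp: inj_on_def weight_series_def)
  finally show ?thesis .
qed

theorem sum_partitions_from_eq_nth_prod_weight_series:
  fixes w :: "nat \<Rightarrow> nat \<Rightarrow> 'a::comm_semiring_1"
  assumes "finite A" "0 \<notin> A"
  shows "(\<Sum>p\<in>partitions_from A N. \<Prod>a\<in>A. w a (count p a)) = (\<Prod>a\<in>A. weight_series (w a) a) $ N"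
  using assms
proof (induction A arbitrary: N rule: finite_induct)
  case empty
  then show ?case by (simp add: partitions_from_empty)
next
  case (insert a A)
  let ?F = "\<Prod>b\<in>A. weight_series (w b) b"
  have "0 < a" using insert by auto
  have weight_split: "(\<Prod>b\<in>insert a A. w b (count (replicate_mset c a + r) b))
      = w a c * (\<Prod>b\<in>A. w b (count r b))" if "r \<in> partitions_from A M" for c r M
  proof -
    have "a \<notin># r" using that insert(2) by (auto simp: partitions_from_def)
    moreover have "(\<Prod>b\<in>A. w b (count (replicate_mset c a + r) b)) = (\<Prod>b\<in>A. w b (count r b))"
      using insert(2) by (intro prod.cong) auto
    ultimately show ?thesis using insert(1,2) by (simp add: not_in_iff)
  qed
  have "(\<Sum>p\<in>partitions_from (insert a A) N. \<Prod>b\<in>insert a A. w b (count p b))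
      = (\<Sum>(c, r)\<in>(SIGMA c:{..N div a}. partitions_from A (N - a * c)).
           \<Prod>b\<in>insert a A. w b (count (replicate_mset c a + r) b))"
    by (subst partitions_from_insert[OF insert(2) \<open>0 < a\<close>],
        subst sum.reindex[OF inj_on_partitions_from_insert[OF insert(2)]]) (simp add: case_prod_beta)
  also have "\<dots> = (\<Sum>c\<le>N div a. \<Sum>r\<in>partitions_from A (N - a * c). w a c * (\<Prod>b\<in>A. w b (count r b)))"
  proof (subst sum.Sigma[symmetric])
    show "finite {..N div a}" "\<forall>c\<in>{..N div a}. finite (partitions_from A (N - a * c))"
      using insert by (auto intro: finite_partitions_from)
  qed (intro sum.cong refl weight_split; assumption)
  also have "\<dots> = (\<Sum>c\<le>N div a. w a c * ?F $ (N - a * c))"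
    using insert by (simp add: sum_distrib_left[symmetric])
  also have "\<dots> = (weight_series (w a) a * ?F) $ N"
    using \<open>0 < a\<close> by (simp add: weight_series_mult_nth)
  finally show ?case
    using insert(1,2) by simp
qed

lemma weight_series_const_one_mult:
  assumes "0 < a"
  shows "weight_series (\<lambda>_. 1::'a::comm_ring_1) a * (1 - fps_X ^ a) = 1"
proof (rule fps_ext)
  fix n
  have "(weight_series (\<lambda>_. 1::'a) a * (1 - fps_X ^ a)) $ n
      = weight_series (\<lambda>_. 1) a $ n - (fps_X ^ a * weight_series (\<lambda>_. 1) a) $ n"
    by (simp add: algebra_simps)
  also have "\<dots> = 1 $ n"
    using assms dvd_minus_self[of a n]
    by (cases "n < a") (auto simp: weight_series_def fps_X_power_mult_nth dest: dvd_imp_le)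
  finally show "(weight_series (\<lambda>_. 1::'a) a * (1 - fps_X ^ a)) $ n = 1 $ n" .
qed

lemma weight_series_at_most_one:
  assumes "0 < a"
  shows "weight_series (\<lambda>c. of_bool (c \<le> 1)) a = (1 + fps_X ^ a :: 'a::comm_semiring_1 fps)"
proof (rule fps_ext)
  fix n
  show "weight_series (\<lambda>c. of_bool (c \<le> 1)) a $ n = (1 + fps_X ^ a :: 'a fps) $ n"
    using assms by (cases "a dvd n") (auto simp: weight_series_def elim!: dvdE intro: gr0I)
qed

text \<open>Weighting the multiplicity of an admissible even part by \<open>sign_weight\<close> both forbids
  repetitions and counts each occurring part with sign \<open>-1\<close>.\<close>
definition sign_weight :: "nat \<Rightarrow> 'a::ring_1" where
  "sign_weight c = (if c = 0 then 1 else if c = 1 then - 1 else 0)"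

lemma weight_series_sign_weight:
  assumes "0 < a"
  shows "weight_series sign_weight a = (1 - fps_X ^ a :: 'a::comm_ring_1 fps)"
proof (rule fps_ext)
  fix n
  show "weight_series sign_weight a $ n = (1 - fps_X ^ a :: 'a fps) $ n"
    using assms
    by (cases "a dvd n") (auto simp: weight_series_def sign_weight_def elim!: dvdE intro: gr0I)
qed

lemma weight_series_at_least_one:
  assumes "0 < a"
  shows "weight_series (\<lambda>c. of_bool (1 \<le> c)) a
       = fps_X ^ a * weight_series (\<lambda>_. 1::'a::comm_semiring_1) a"
proof (rule fps_ext)
  fix n
  show "weight_series (\<lambda>c. of_bool (1 \<le> c)) a $ n
      = (fps_X ^ a * weight_series (\<lambda>_. 1::'a) a) $ n"
    using assms dvd_minus_self[of a n]
    by (cases "n < a")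
       (auto simp: weight_series_def fps_X_power_mult_nth less_eq_div_iff_mult_less_eq
         dest: dvd_imp_le)
qed

section \<open>Finite q-products\<close>

abbreviation q :: "int fps" where "q \<equiv> fps_X"

definition one_plus_prod :: "nat \<Rightarrow> nat \<Rightarrow> int fps" where
  "one_plus_prod m L = (\<Prod>i\<in>{Suc m..L}. 1 + q ^ i)"

definition odd_prod :: "nat \<Rightarrow> int fps" where
  "odd_prod l = (\<Prod>i<l. 1 - q ^ (2 * i + 1))"

definition odd_parts_series :: "nat \<Rightarrow> int fps" where
  "odd_parts_series l = (\<Prod>i<l. weight_series (\<lambda>_. 1) (2 * i + 1))"

definition even_prod :: "nat \<Rightarrow> nat \<Rightarrow> int fps" where
  "even_prod k l = (\<Prod>i<k. 1 - q ^ (2 * (l + i)))"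

lemma one_minus_q_power_nonzero:
  assumes "0 < a"
  shows "1 - q ^ a \<noteq> 0"
proof
  assume "1 - q ^ a = 0"
  then have "(1 - q ^ a) $ 0 = 0" by simp
  with assms show False by simp
qed

lemma odd_parts_series_Suc: "odd_parts_series (Suc l) * (1 - q ^ (2 * l + 1)) = odd_parts_series l"
  using weight_series_const_one_mult[of "2 * l + 1", where 'a=int]
  by (simp add: odd_parts_series_def mult.assoc)

lemma odd_parts_series_mult_odd_prod: "odd_parts_series l * odd_prod l = 1"
proof (induction l)
  case 0
  then show ?case by (simp add: odd_parts_series_def odd_prod_def)
next
  case (Suc l)
  have "odd_parts_series (Suc l) * odd_prod (Suc l)
      = odd_parts_series (Suc l) * (1 - q ^ (2 * l + 1)) * odd_prod l"
    by (simp add: odd_prod_def mult.assoc)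
  then show ?case by (simp only: odd_parts_series_Suc Suc.IH)
qed

lemma q_power_mult_odd_parts_series:
  "q ^ (2 * Suc l) * odd_parts_series (Suc l) = q * (odd_parts_series (Suc l) - odd_parts_series l)"
proof -
  have "odd_parts_series (Suc l) - odd_parts_series l = odd_parts_series (Suc l) * q ^ (2 * l + 1)"
    using odd_parts_series_Suc[of l] by (simp add: algebra_simps)
  moreover have "q ^ (2 * Suc l) = q * q ^ (2 * l + 1)"
    by simp
  ultimately show ?thesis by (simp only: mult_ac)
qed

text \<open>The finite form of Euler's identity \<open>(-q;q)_\<infinity> (q;q^2)_\<infinity> = 1\<close>.\<close>
lemma one_plus_prod_mult_odd_prod:
  "one_plus_prod 0 l * odd_prod l = (\<Prod>i\<in>{Suc l..2 * l}. 1 - q ^ i)"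
proof (induction l)
  case 0
  then show ?case by (simp add: one_plus_prod_def odd_prod_def)
next
  case (Suc l)
  have "q ^ (2 * l + 2) = q ^ Suc l * q ^ Suc l"
    by (simp add: power_add[symmetric] del: power_Suc)
  then have square: "(1 + q ^ Suc l) * (1 - q ^ Suc l) = 1 - q ^ (2 * l + 2)"
    by (simp add: algebra_simps)
  have "one_plus_prod 0 (Suc l) * odd_prod (Suc l) * (1 - q ^ Suc l)
      = (one_plus_prod 0 l * odd_prod l) * (1 - q ^ (2 * l + 1)) * ((1 + q ^ Suc l) * (1 - q ^ Suc l))"
    by (simp add: one_plus_prod_def odd_prod_def mult_ac del: power_Suc)
  also have "\<dots> = (\<Prod>i\<in>{Suc l..2 * l}. 1 - q ^ i) * (1 - q ^ (2 * l + 1)) * (1 - q ^ (2 * l + 2))"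
    by (simp only: Suc.IH square)
  also have "\<dots> = (\<Prod>i\<in>{Suc l..Suc (Suc (2 * l))}. 1 - q ^ i)"
    by (simp only: prod.cl_ivl_Suc) (simp del: power_Suc)
  also have "\<dots> = (\<Prod>i\<in>{Suc (Suc l)..2 * Suc l}. 1 - q ^ i) * (1 - q ^ Suc l)"
    by (subst prod.atLeast_Suc_atMost) (auto simp: mult.commute)
  finally show ?case
    using one_minus_q_power_nonzero[of "Suc l"] by simp
qed

lemma odd_parts_series_eq:
  "one_plus_prod 0 l * (\<Prod>a\<in>{Suc l..2 * l}. weight_series (\<lambda>_. 1) a) = odd_parts_series l"
proof -
  let ?G = "\<Prod>a\<in>{Suc l..2 * l}. weight_series (\<lambda>_. 1) a"
  have "?G * (\<Prod>i\<in>{Suc l..2 * l}. 1 - q ^ i) = (\<Prod>a\<in>{Suc l..2 * l}. weight_series (\<lambda>_. 1) a * (1 - q ^ a))"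
    by (rule prod.distrib[symmetric])
  also have "\<dots> = 1"
    by (intro prod.neutral ballI weight_series_const_one_mult) auto
  finally have "?G * (one_plus_prod 0 l * odd_prod l) = 1"
    by (simp only: one_plus_prod_mult_odd_prod)
  then have "one_plus_prod 0 l * ?G * odd_prod l = odd_parts_series l * odd_prod l"
    by (simp only: odd_parts_series_mult_odd_prod mult_ac)
  moreover have "odd_prod l \<noteq> 0"
    using odd_parts_series_mult_odd_prod[of l] by auto
  ultimately show ?thesis by simp
qed

lemma dvd_prod_minus_one:
  fixes f :: "'b \<Rightarrow> 'a::comm_ring_1"
  assumes "finite I" "\<And>i. i \<in> I \<Longrightarrow> d dvd f i - 1"
  shows "d dvd prod f I - 1"
  using assms
proof (induction I rule: finite_induct)
  case (insert i I)
  have "prod f (insert i I) - 1 = (f i - 1) * prod f I + (prod f I - 1)"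
    using insert by (simp add: algebra_simps)
  also have "d dvd \<dots>"
    using insert by (intro dvd_add dvd_mult2) auto
  finally show ?case .
qed simp

lemma q_power_dvd_one_minus_q_power_minus_one: "m \<le> a \<Longrightarrow> q ^ m dvd (1 - q ^ a) - 1"
  by (simp add: le_imp_power_dvd)

lemma even_prod_Suc: "even_prod (Suc k) l = even_prod k l * (1 - q ^ (2 * (l + k)))"
  by (simp add: even_prod_def)

lemma even_prod_Suc_shift: "even_prod (Suc k) l = (1 - q ^ (2 * l)) * even_prod k (Suc l)"
  unfolding even_prod_def prod.lessThan_Suc_shift by simp

lemma even_prod_cong: "q ^ Suc L dvd even_prod k (Suc L) - 1"
  unfolding even_prod_def by (intro dvd_prod_minus_one q_power_dvd_one_minus_q_power_minus_one) auto

text \<open>The finite Euler identity differs from the infinite one only by factors \<open>1 - q^i\<close>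
  with \<open>i > L\<close>.\<close>
lemma odd_parts_series_cong: "q ^ Suc L dvd odd_parts_series L - one_plus_prod 0 L"
proof -
  have "odd_parts_series L * (\<Prod>i\<in>{Suc L..2 * L}. 1 - q ^ i)
      = one_plus_prod 0 L * (odd_parts_series L * odd_prod L)"
    unfolding one_plus_prod_mult_odd_prod[symmetric] by (simp only: mult_ac)
  then have "odd_parts_series L - one_plus_prod 0 L
      = - odd_parts_series L * ((\<Prod>i\<in>{Suc L..2 * L}. 1 - q ^ i) - 1)"
    by (simp add: odd_parts_series_mult_odd_prod algebra_simps)
  moreover have "q ^ Suc L dvd (\<Prod>i\<in>{Suc L..2 * L}. 1 - q ^ i) - 1"
    by (intro dvd_prod_minus_one q_power_dvd_one_minus_q_power_minus_one) auto
  ultimately show ?thesis by simp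
qed

section \<open>The congruence between the generating functions of \<open>C\<close> and \<open>D\<close>\<close>

text \<open>By \<open>odd_parts_series_eq\<close>, \<open>odd_parts_series l\<close> is the paper's \<open>(-q;q)_l / (q^(l+1);q)_l\<close>,
  so this is the generating function of \<open>C_k^e - C_k^o\<close> truncated to \<open>l \<le> L\<close>.\<close>
definition C_series :: "nat \<Rightarrow> nat \<Rightarrow> int fps" where
  "C_series k L = (\<Sum>l=1..L. q ^ (2 * l) * even_prod (k - 1) (Suc l) * odd_parts_series l)"

definition D_series :: "nat \<Rightarrow> nat \<Rightarrow> int fps" where
  "D_series j L = (\<Sum>m\<le>L. q ^ (j * m) * one_plus_prod m L)"

text \<open>Shifted by one: \<open>defect_poly k\<close> belongs to \<open>C_series (Suc k)\<close>. The recursion mirrors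
  \<open>C_series_Suc\<close> and \<open>D_series_Suc\<close>.\<close>
primrec defect_poly :: "nat \<Rightarrow> int fps" where
  "defect_poly 0 = - 1 - q"
| "defect_poly (Suc k) = (1 - q ^ (2 * Suc k)) * (1 - q ^ (2 * Suc k + 1)) * defect_poly k
      - 2 * q ^ (2 * Suc k + 1) * even_prod (Suc k) 1"

lemma C_series_1: "C_series 1 L = q * (odd_parts_series L - 1)"
proof -
  have "C_series 1 L = (\<Sum>l<L. q ^ (2 * Suc l) * odd_parts_series (Suc l))"
    by (simp add: C_series_def even_prod_def sum.atLeast1_atMost_eq del: power_Suc)
  also have "\<dots> = (\<Sum>l<L. q * (odd_parts_series (Suc l) - odd_parts_series l))"
    by (simp only: q_power_mult_odd_parts_series)
  also have "\<dots> = q * (odd_parts_series L - odd_parts_series 0)"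
    by (simp add: sum_distrib_left[symmetric] sum_lessThan_telescope)
  finally show ?thesis by (simp add: odd_parts_series_def)
qed

lemma C_series_Suc_summand:
  fixes k l :: nat
  defines "A \<equiv> (1 - q ^ (2 * Suc k)) * (1 - q ^ (2 * Suc k + 1))"
    and "f \<equiv> \<lambda>m. odd_parts_series m * even_prod (Suc k) (Suc m)"
  shows "q ^ (2 * Suc l) * even_prod (Suc k) (Suc (Suc l)) * odd_parts_series (Suc l)
       - A * (q ^ (2 * Suc l) * even_prod k (Suc (Suc l)) * odd_parts_series (Suc l))
       = q ^ (2 * Suc k + 1) * (f (Suc l) - f l)"
proof -
  define c where "c = even_prod k (Suc (Suc l))"
  define u where "u = odd_parts_series (Suc l)"
  define y where "y = q ^ l"
  define z where "z = q ^ Suc k"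
  have powers: "q ^ (2 * Suc l) = q*q*y*y" "q ^ (2 * (Suc (Suc l) + k)) = q*q*y*y*z*z"
      "q ^ (2 * Suc k) = z*z" "q ^ (2 * Suc k + 1) = q*z*z" "q ^ (2 * l + 1) = q*y*y"
    by (simp_all add: y_def z_def power_add mult_2 mult_2_right mult_ac numeral_3_eq_3)
  have odd_l: "odd_parts_series l = u * (1 - q*y*y)"
    by (simp only: u_def odd_parts_series_Suc flip: powers(5))
  have even_Suc_Suc: "even_prod (Suc k) (Suc (Suc l)) = c * (1 - q*q*y*y*z*z)"
    by (simp only: c_def even_prod_Suc flip: powers(2))
  have even_Suc: "even_prod (Suc k) (Suc l) = (1 - q*q*y*y) * c"
    by (simp only: c_def even_prod_Suc_shift flip: powers(1))
  have "q ^ (2 * Suc l) * even_prod (Suc k) (Suc (Suc l)) * odd_parts_series (Suc l)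
       - A * (q ^ (2 * Suc l) * even_prod k (Suc (Suc l)) * odd_parts_series (Suc l))
      = q*q*y*y * (c * (1 - q*q*y*y*z*z)) * u - (1 - z*z) * (1 - q*z*z) * (q*q*y*y * c * u)"
    by (simp only: A_def even_Suc_Suc powers c_def[symmetric] u_def[symmetric])
  also have "\<dots> = q*z*z * (u * (c * (1 - q*q*y*y*z*z)) - u * (1 - q*y*y) * ((1 - q*q*y*y) * c))"
    by (simp add: algebra_simps)
  also have "\<dots> = q ^ (2 * Suc k + 1) * (f (Suc l) - f l)"
    by (simp only: f_def odd_l even_Suc even_Suc_Suc powers u_def)
  finally show ?thesis .
qed

lemma C_series_Suc:
  "C_series (Suc (Suc k)) L = (1 - q ^ (2 * Suc k)) * (1 - q ^ (2 * Suc k + 1)) * C_series (Suc k) L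
     + q ^ (2 * Suc k + 1) * (odd_parts_series L * even_prod (Suc k) (Suc L) - even_prod (Suc k) 1)"
proof -
  define A where "A = (1 - q ^ (2 * Suc k)) * (1 - q ^ (2 * Suc k + 1))"
  define f where "f m = odd_parts_series m * even_prod (Suc k) (Suc m)" for m
  have "C_series (Suc (Suc k)) L - A * C_series (Suc k) L
      = (\<Sum>l<L. q ^ (2 * Suc l) * even_prod (Suc k) (Suc (Suc l)) * odd_parts_series (Suc l)
          - A * (q ^ (2 * Suc l) * even_prod k (Suc (Suc l)) * odd_parts_series (Suc l)))"
    by (simp add: C_series_def sum_subtractf sum_distrib_left sum.atLeast1_atMost_eq del: power_Suc)
  also have "\<dots> = (\<Sum>l<L. q ^ (2 * Suc k + 1) * (f (Suc l) - f l))"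
    unfolding A_def f_def by (simp only: C_series_Suc_summand)
  also have "\<dots> = q ^ (2 * Suc k + 1) * (f L - f 0)"
    by (simp add: sum_distrib_left[symmetric] sum_lessThan_telescope)
  finally show ?thesis
    by (simp add: A_def f_def odd_parts_series_def algebra_simps del: power_Suc)
qed

lemma D_series_Suc:
  assumes "1 \<le> L"
  shows "D_series (j + 1) L = 2 * one_plus_prod 0 L - (1 - q ^ j) * D_series j L - q ^ (j * (L + 1))"
proof -
  obtain L' where L': "L = Suc L'" using assms by (cases L) auto
  have step: "(1 + q ^ Suc m) * one_plus_prod (Suc m) L = one_plus_prod m L" if "m \<le> L'" for m
    using that unfolding one_plus_prod_def L' by (subst (2) prod.atLeast_Suc_atMost) auto
  have "D_series j L + D_series (j + 1) L = (\<Sum>m\<le>L. q ^ (j * m) * ((1 + q ^ m) * one_plus_prod m L))"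
    by (simp add: D_series_def sum.distrib[symmetric] power_add algebra_simps)
  also have "\<dots> = 2 * one_plus_prod 0 L
      + (\<Sum>m\<le>L'. q ^ (j * Suc m) * ((1 + q ^ Suc m) * one_plus_prod (Suc m) L))"
    unfolding L' sum.atMost_Suc_shift by simp
  also have "\<dots> = 2 * one_plus_prod 0 L + (\<Sum>m\<le>L'. q ^ (j * Suc m) * one_plus_prod m L)"
    by (intro arg_cong2[where f = plus] refl sum.cong) (simp_all add: step del: power_Suc)
  finally have sum_eq: "D_series j L + D_series (j + 1) L
      = 2 * one_plus_prod 0 L + (\<Sum>m\<le>L'. q ^ (j * Suc m) * one_plus_prod m L)" .
  have "q ^ j * D_series j L = (\<Sum>m\<le>L. q ^ (j * Suc m) * one_plus_prod m L)"
    by (simp add: D_series_def sum_distrib_left power_add mult.assoc)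
  also have "\<dots> = (\<Sum>m\<le>L'. q ^ (j * Suc m) * one_plus_prod m L) + q ^ (j * (L + 1))"
    by (simp add: L' one_plus_prod_def del: power_Suc)
  finally show ?thesis
    using sum_eq by (simp add: algebra_simps)
qed

lemma C_series_D_series_defect_Suc:
  fixes k L :: nat
  assumes "1 \<le> L"
  defines "a \<equiv> 2 * Suc k" and "U \<equiv> odd_parts_series L" and "P \<equiv> one_plus_prod 0 L"
  shows "2 * C_series (Suc (Suc k)) L - D_series (2 * Suc (Suc k)) L - defect_poly (Suc k)
      = (1 - q ^ a) * (1 - q ^ (a + 1)) * (2 * C_series (Suc k) L - D_series a L - defect_poly k)
        + 2 * q ^ (a + 1) * (U * (even_prod (Suc k) (Suc L) - 1) + (U - P))
        - (1 - q ^ (a + 1)) * q ^ (a * (L + 1)) + q ^ ((a + 1) * (L + 1))"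
proof -
  have D_odd: "D_series (a + 1) L = 2 * P - (1 - q ^ a) * D_series a L - q ^ (a * (L + 1))"
    unfolding P_def by (rule D_series_Suc[OF assms(1)])
  have D_even: "D_series (2 * Suc (Suc k)) L
      = 2 * P - (1 - q ^ (a + 1)) * D_series (a + 1) L - q ^ ((a + 1) * (L + 1))"
    using D_series_Suc[OF assms(1), of "a + 1"] by (simp add: a_def P_def)
  show ?thesis
    unfolding C_series_Suc D_even D_odd defect_poly.simps a_def[symmetric] U_def[symmetric]
    by (simp add: algebra_simps)
qed

theorem C_series_D_series_cong:
  assumes "1 \<le> L"
  shows "q ^ Suc L dvd 2 * C_series (Suc k) L - D_series (2 * Suc k) L - defect_poly k"
proof (induction k)
  case 0
  have D_1: "D_series 1 L = 2 * one_plus_prod 0 L - 1"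
    using D_series_Suc[OF assms, of 0] by simp
  have D_2: "D_series 2 L = 2 * one_plus_prod 0 L - (1 - q) * D_series 1 L - q ^ Suc L"
    using D_series_Suc[OF assms, of 1, unfolded one_add_one] by simp
  have "2 * C_series 1 L - D_series 2 L - defect_poly 0
      = 2 * q * (odd_parts_series L - one_plus_prod 0 L) + q ^ Suc L"
    unfolding C_series_1 D_2 D_1 defect_poly.simps by (simp add: algebra_simps)
  moreover have "q ^ Suc L dvd 2 * q * (odd_parts_series L - one_plus_prod 0 L) + q ^ Suc L"
    using odd_parts_series_cong[of L] by (intro dvd_add dvd_mult) auto
  ultimately show ?case by simp
next
  case (Suc k)
  have "q ^ Suc L dvd odd_parts_series L * (even_prod (Suc k) (Suc L) - 1)
      + (odd_parts_series L - one_plus_prod 0 L)"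
    by (intro dvd_add dvd_mult even_prod_cong odd_parts_series_cong)
  moreover have "q ^ Suc L dvd q ^ (2 * Suc k * (L + 1))" "q ^ Suc L dvd q ^ ((2 * Suc k + 1) * (L + 1))"
    by (simp_all add: le_imp_power_dvd)
  ultimately show ?case
    unfolding C_series_D_series_defect_Suc[OF assms] using Suc.IH by (meson dvd_add dvd_diff dvd_mult)
qed

definition fps_degree_le :: "'a::zero fps \<Rightarrow> nat \<Rightarrow> bool" where
  "fps_degree_le f d \<longleftrightarrow> (\<forall>i>d. f $ i = 0)"

lemma fps_degree_le_mono: "fps_degree_le f d \<Longrightarrow> d \<le> e \<Longrightarrow> fps_degree_le f e"
  by (auto simp: fps_degree_le_def)

lemma fps_degree_le_diff:
  "fps_degree_le f d \<Longrightarrow> fps_degree_le g d \<Longrightarrow> fps_degree_le (f - g :: 'a::ab_group_add fps) d"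
  by (auto simp: fps_degree_le_def)

lemma fps_degree_le_mult:
  fixes f g :: "'a::semiring_0 fps"
  assumes "fps_degree_le f d" "fps_degree_le g e"
  shows "fps_degree_le (f * g) (d + e)"
  unfolding fps_degree_le_def
proof (intro allI impI)
  fix i assume "d + e < i"
  then have "f $ j * g $ (i - j) = 0" for j
    using assms by (cases "d < j") (auto simp: fps_degree_le_def)
  then show "(f * g) $ i = 0"
    by (simp add: fps_mult_nth)
qed

lemma fps_degree_le_const: "fps_degree_le (fps_const c) 0"
  by (simp add: fps_degree_le_def)

lemma fps_degree_le_X_power: "fps_degree_le (fps_X ^ a :: 'a::comm_ring_1 fps) a"
  by (simp add: fps_degree_le_def)

lemma fps_degree_le_one_minus_X_power: "fps_degree_le (1 - fps_X ^ a :: 'a::comm_ring_1 fps) a"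
  by (simp add: fps_degree_le_def)

lemma fps_degree_le_even_prod: "fps_degree_le (even_prod k 1) (k * Suc k)"
proof (induction k)
  case 0
  then show ?case by (simp add: even_prod_def fps_degree_le_def)
next
  case (Suc k)
  have "fps_degree_le (even_prod k 1 * (1 - q ^ (2 * (1 + k)))) (k * Suc k + 2 * (1 + k))"
    by (intro fps_degree_le_mult Suc.IH fps_degree_le_one_minus_X_power)
  then show ?case
    by (simp add: even_prod_Suc fps_degree_le_mono)
qed

lemma fps_degree_le_defect_poly: "fps_degree_le (defect_poly k) (Suc k * (2 * k + 1))"
proof (induction k)
  case 0
  then show ?case by (auto simp: fps_degree_le_def fps_X_def)
next
  case (Suc k)
  have "fps_degree_le ((1 - q ^ (2 * Suc k)) * (1 - q ^ (2 * Suc k + 1)) * defect_poly k)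
      (2 * Suc k + (2 * Suc k + 1) + Suc k * (2 * k + 1))"
    by (intro fps_degree_le_mult Suc.IH fps_degree_le_one_minus_X_power)
  moreover have "fps_degree_le (fps_const 2 * q ^ (2 * Suc k + 1) * even_prod (Suc k) 1)
      (0 + (2 * Suc k + 1) + Suc k * Suc (Suc k))"
    by (intro fps_degree_le_mult fps_degree_le_const fps_degree_le_X_power fps_degree_le_even_prod)
  ultimately show ?case
    by (auto simp: numeral_fps_const intro!: fps_degree_le_diff elim!: fps_degree_le_mono)
qed

lemma dvd_imp_fps_nth_eq_0: "fps_X ^ m dvd f \<Longrightarrow> i < m \<Longrightarrow> f $ i = 0"
  by (auto simp: fps_X_power_mult_nth elim!: dvdE)

corollary two_nth_C_series_eq_nth_D_series:
  assumes "1 \<le> k" "k * (2 * k - 1) < N"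
  shows "2 * C_series k N $ N = D_series (2 * k) N $ N"
proof -
  obtain k' where k: "k = Suc k'" using assms(1) by (cases k) auto
  have "1 \<le> N" using assms by (cases N) auto
  then have "(2 * C_series k N - D_series (2 * k) N - defect_poly k') $ N = 0"
    unfolding k by (intro dvd_imp_fps_nth_eq_0[OF C_series_D_series_cong]) auto
  moreover have "defect_poly k' $ N = 0"
    using fps_degree_le_defect_poly[of k'] assms(2) by (simp add: k fps_degree_le_def)
  ultimately show ?thesis
    by (simp add: numeral_fps_const)
qed

section \<open>Counting the partitions \<open>D_j(N)\<close>\<close>

definition distinct_partitions_from :: "nat set \<Rightarrow> nat \<Rightarrow> nat multiset set" where
  "distinct_partitions_from A N = {p \<in> partitions_from A N. \<forall>a\<in>A. count p a \<le> 1}"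

lemma card_distinct_partitions_from:
  assumes "finite A" "0 \<notin> A"
  shows "int (card (distinct_partitions_from A N)) = (\<Prod>a\<in>A. 1 + q ^ a) $ N"
proof -
  have "int (card (distinct_partitions_from A N))
      = (\<Sum>p\<in>partitions_from A N. \<Prod>a\<in>A. of_bool (count p a \<le> 1))"
    using assms by (simp add: distinct_partitions_from_def finite_partitions_from prod_of_bool Int_def)
  also have "\<dots> = (\<Prod>a\<in>A. weight_series (\<lambda>c. of_bool (c \<le> 1)) a) $ N"
    using assms by (rule sum_partitions_from_eq_nth_prod_weight_series)
  also have "(\<Prod>a\<in>A. weight_series (\<lambda>c. of_bool (c \<le> 1)) a) = (\<Prod>a\<in>A. 1 + q ^ a)"
    using assms by (intro prod.cong refl weight_series_at_most_one) (auto intro: gr0I)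
  finally show ?thesis .
qed

text \<open>The smallest part \<open>m\<close> may be \<open>0\<close>; only the remainder, whose parts exceed \<open>m\<close>, is
  counted by \<open>partitions_from\<close>.\<close>
lemma D_set_decompose:
  assumes "p \<in> D_set j N"
  obtains m r where "p = replicate_mset j m + r" "j * m \<le> N"
    "r \<in> distinct_partitions_from {Suc m..N} (N - j * m)"
proof -
  define m where "m = Min (set_mset p)"
  define r where "r = filter_mset (\<lambda>x. x \<noteq> m) p"
  have "p \<noteq> {#}" and sum_p: "sum_mset p = N" and count_m: "count p m = j"
    and count_other: "\<And>x. x \<in># p \<Longrightarrow> x \<noteq> m \<Longrightarrow> count p x = 1"
    using assms by (auto simp: D_set_def m_def)
  have p_eq: "p = replicate_mset j m + r"
    unfolding r_def by (rule multiset_eqI) (auto simp: count_m)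
  then have "j * m \<le> N" "sum_mset r = N - j * m"
    using sum_p by auto
  moreover have "set_mset r \<subseteq> {Suc m..N}"
  proof
    fix x assume "x \<in> set_mset r"
    then have "x \<in># p" "x \<noteq> m" by (auto simp: r_def)
    moreover have "m \<le> x" "x \<le> N"
      using \<open>x \<in># p\<close> sum_p member_le_sum_mset by (auto simp: m_def)
    ultimately show "x \<in> {Suc m..N}" by auto
  qed
  moreover have "count r x \<le> 1" for x
    using count_other[of x] by (cases "x \<in># r") (auto simp: r_def not_in_iff)
  ultimately show ?thesis
    using p_eq by (intro that) (auto simp: distinct_partitions_from_def partitions_from_def)
qed

lemma replicate_plus_distinct_in_D_set:
  assumes "1 \<le> j" "j * m \<le> N" "r \<in> distinct_partitions_from {Suc m..N} (N - j * m)"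
  shows "replicate_mset j m + r \<in> D_set j N" "Min (set_mset (replicate_mset j m + r)) = m"
proof -
  have r_parts: "set_mset r \<subseteq> {Suc m..N}" and sum_r: "sum_mset r = N - j * m"
    using assms(3) by (auto simp: distinct_partitions_from_def partitions_from_def)
  have count_r: "count r a \<le> 1" for a
    using assms(3) r_parts
    by (cases "a \<in># r") (auto simp: distinct_partitions_from_def not_in_iff)
  let ?p = "replicate_mset j m + r"
  have "m \<notin># r" using r_parts by auto
  have set_p: "set_mset ?p = insert m (set_mset r)"
    using assms(1) by auto
  show min_p: "Min (set_mset ?p) = m"
    unfolding set_p using r_parts by (intro Min_eqI) auto
  have "count ?p x = 1" if "x \<in># ?p" "x \<noteq> m" for x
  proof -
    have "0 < count r x" using that by (auto split: if_splits)
    then have "count r x = 1" using count_r[of x] by linarith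
    then show ?thesis using that(2) by simp
  qed
  then show "?p \<in> D_set j N"
    unfolding D_set_def mem_Collect_eq min_p
    using assms(1,2) sum_r \<open>m \<notin># r\<close> by (auto simp: not_in_iff)
qed

lemma D_set_eq_UN:
  assumes "1 \<le> j"
  shows "D_set j N = (\<Union>m\<le>N div j. (\<lambda>r. replicate_mset j m + r) ` distinct_partitions_from {Suc m..N} (N - j * m))"
    (is "_ = (\<Union>m\<le>N div j. ?D m)")
proof (intro equalityI subsetI)
  fix p assume "p \<in> D_set j N"
  then obtain m r where "p = replicate_mset j m + r" "j * m \<le> N"
      "r \<in> distinct_partitions_from {Suc m..N} (N - j * m)"
    by (rule D_set_decompose)
  with assms show "p \<in> (\<Union>m\<le>N div j. ?D m)"
    by (intro UN_I[of m]) (auto simp: less_eq_div_iff_mult_less_eq mult.commute)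
next
  fix p assume "p \<in> (\<Union>m\<le>N div j. ?D m)"
  with assms show "p \<in> D_set j N"
    by (auto simp: less_eq_div_iff_mult_less_eq mult.commute intro: replicate_plus_distinct_in_D_set)
qed

lemma nth_D_series:
  assumes "1 \<le> j"
  shows "D_series j N $ N = (\<Sum>m\<le>N div j. one_plus_prod m N $ (N - j * m))"
proof -
  have "(\<Sum>m\<le>N div j. one_plus_prod m N $ (N - j * m)) = (\<Sum>m\<le>N. (q ^ (j * m) * one_plus_prod m N) $ N)"
  proof (rule sum.mono_neutral_cong_left)
    show "{..N div j} \<subseteq> {..N}"
      by (auto intro: order.trans[OF _ div_le_dividend])
    show "\<forall>m\<in>{..N} - {..N div j}. (q ^ (j * m) * one_plus_prod m N) $ N = 0"
    proof
      fix m assume "m \<in> {..N} - {..N div j}"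
      then have "N < j * m"
        using assms by (simp add: div_less_iff_less_mult not_le mult.commute[of j])
      then show "(q ^ (j * m) * one_plus_prod m N) $ N = 0"
        by (simp add: fps_X_power_mult_nth)
    qed
    show "one_plus_prod m N $ (N - j * m) = (q ^ (j * m) * one_plus_prod m N) $ N"
      if "m \<in> {..N div j}" for m
      using that assms by (simp add: fps_X_power_mult_nth less_eq_div_iff_mult_less_eq mult.commute[of m j])
  qed simp
  then show ?thesis
    by (simp add: D_series_def fps_sum_nth)
qed

theorem D_eq_nth_D_series:
  assumes "1 \<le> j"
  shows "int (D j N) = D_series j N $ N"
proof -
  let ?D = "\<lambda>m. (\<lambda>r. replicate_mset j m + r) ` distinct_partitions_from {Suc m..N} (N - j * m)"
  have finite: "finite (distinct_partitions_from {Suc m..N} M)" for m M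
    by (rule finite_subset[OF _ finite_partitions_from[of "{Suc m..N}"]])
       (auto simp: distinct_partitions_from_def)
  have min_part: "Min (set_mset p) = m" if "p \<in> ?D m" "m \<le> N div j" for p m
    using that assms
    by (auto intro: replicate_plus_distinct_in_D_set(2) simp: less_eq_div_iff_mult_less_eq mult.commute)
  have disjoint: "?D m \<inter> ?D m' = {}" if "m \<le> N div j" "m' \<le> N div j" "m \<noteq> m'" for m m'
  proof (intro equals0I)
    fix p assume "p \<in> ?D m \<inter> ?D m'"
    then show False using min_part[of p m] min_part[of p m'] that by auto
  qed
  have "int (D j N) = (\<Sum>m\<le>N div j. int (card (distinct_partitions_from {Suc m..N} (N - j * m))))"
    unfolding D_def D_set_eq_UN[OF assms]
    by (subst card_UN_disjoint) (auto simp: finite disjoint card_image)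
  also have "\<dots> = (\<Sum>m\<le>N div j. one_plus_prod m N $ (N - j * m))"
    unfolding one_plus_prod_def by (intro sum.cong refl card_distinct_partitions_from) auto
  finally show ?thesis
    by (simp add: nth_D_series[OF assms])
qed

section \<open>Counting the signed partitions \<open>B\<close> and \<open>C\<close>\<close>

lemma card_even_minus_card_odd:
  assumes "finite S"
  shows "int (card {x\<in>S. even (f x)}) - int (card {x\<in>S. odd (f x)}) = (\<Sum>x\<in>S. (- 1) ^ f x)"
proof -
  have "(\<Sum>x\<in>S. (- 1 :: int) ^ f x) = (\<Sum>x\<in>S. if even (f x) then 1 else - 1)"
    by (simp add: minus_one_power_iff)
  also have "\<dots> = int (card {x\<in>S. even (f x)}) - int (card {x\<in>S. odd (f x)})"
    using assms by (simp add: sum.If_cases Int_def conj_commute)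
  finally show ?thesis ..
qed

lemma card_set_mset_eq_size:
  assumes "\<And>x. x \<in># M \<Longrightarrow> count M x = 1"
  shows "card (set_mset M) = size M"
proof -
  have "M = mset_set (set_mset M)"
  proof (rule multiset_eqI)
    show "count M x = count (mset_set (set_mset M)) x" for x
      by (cases "x \<in># M") (simp_all add: assms not_in_iff)
  qed
  then show ?thesis by (metis size_mset_set)
qed

lemma prod_sign_weight_count:
  assumes "finite A" "\<And>a. a \<in> A \<Longrightarrow> a \<in># p \<Longrightarrow> count p a = 1"
  shows "(\<Prod>a\<in>A. sign_weight (count p a)) = ((- 1) ^ size (filter_mset (\<lambda>x. x \<in> A) p) :: 'a::comm_ring_1)"
proof -
  have "(\<Prod>a\<in>A. sign_weight (count p a)) = (\<Prod>a\<in>A. if a \<in># p then - 1 else 1 :: 'a)"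
  proof (intro prod.cong refl)
    fix a assume "a \<in> A"
    then show "sign_weight (count p a) = (if a \<in># p then - 1 else 1 :: 'a)"
      using assms(2)[of a] by (cases "a \<in># p") (auto simp: sign_weight_def count_eq_zero_iff)
  qed
  also have "\<dots> = (- 1) ^ card {a\<in>A. a \<in># p}"
    using assms(1) by (simp add: prod.If_cases Int_def conj_commute)
  also have "{a\<in>A. a \<in># p} = set_mset (filter_mset (\<lambda>x. x \<in> A) p)"
    by auto
  also have "card \<dots> = size (filter_mset (\<lambda>x. x \<in> A) p)"
    using assms(2) by (intro card_set_mset_eq_size) auto
  finally show ?thesis .
qed

definition odd_below :: "nat \<Rightarrow> nat set" where
  "odd_below l = (\<lambda>i. 2 * i + 1) ` {..<l}"

definition even_window :: "nat \<Rightarrow> nat \<Rightarrow> nat set" where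
  "even_window k l = (\<lambda>i. 2 * (Suc l + i)) ` {..<k - 1}"

lemma mem_odd_below: "a \<in> odd_below l \<longleftrightarrow> odd a \<and> a < 2 * l"
  by (auto simp: odd_below_def elim!: oddE)

lemma mem_even_window:
  "a \<in> even_window k l \<longleftrightarrow> even a \<and> 2 * l + 2 \<le> a \<and> a \<le> 2 * l + 2 * k - 2"
proof
  assume "even a \<and> 2 * l + 2 \<le> a \<and> a \<le> 2 * l + 2 * k - 2"
  then obtain b where "a = 2 * b" "Suc l \<le> b" "b - Suc l < k - 1" by (auto elim!: evenE)
  then show "a \<in> even_window k l"
    unfolding even_window_def by (intro image_eqI[where x = "b - Suc l"]) auto
qed (auto simp: even_window_def)

lemma finite_odd_below: "finite (odd_below l)"
  by (simp add: odd_below_def)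

lemma finite_even_window: "finite (even_window k l)"
  by (simp add: even_window_def)

lemma prod_weight_series_even_window:
  "(\<Prod>a\<in>even_window k l. weight_series sign_weight a) = even_prod (k - 1) (Suc l)"
  unfolding even_window_def even_prod_def
  by (subst prod.reindex) (auto simp: inj_on_def weight_series_sign_weight)

text \<open>The \<open>l\<close> of the paper, whose largest odd part is \<open>2l - 1\<close>; a junk value unless \<open>p\<close> has an
  odd part.\<close>
definition largest_odd_index :: "nat multiset \<Rightarrow> nat" where
  "largest_odd_index p = (Max {x. x \<in># p \<and> odd x} + 1) div 2"

lemma largest_odd_index:
  assumes "\<exists>x\<in>#p. odd x"
  shows "1 \<le> largest_odd_index p" "2 * largest_odd_index p - 1 \<in># p"
    and "\<And>x. x \<in># p \<Longrightarrow> odd x \<Longrightarrow> x < 2 * largest_odd_index p"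
proof -
  let ?M = "Max {x. x \<in># p \<and> odd x}"
  have finite: "finite {x. x \<in># p \<and> odd x}"
    by (rule finite_subset[of _ "set_mset p"]) auto
  then have "?M \<in> {x. x \<in># p \<and> odd x}"
    using assms by (intro Max_in) auto
  then obtain t where M: "?M = 2 * t + 1" "?M \<in># p" by (auto elim!: oddE)
  then show "1 \<le> largest_odd_index p" "2 * largest_odd_index p - 1 \<in># p"
    by (simp_all add: largest_odd_index_def)
  show "x < 2 * largest_odd_index p" if "x \<in># p" "odd x" for x
    using Max_ge[OF finite, of x] that M(1) by (simp add: largest_odd_index_def)
qed

lemma largest_odd_index_eqI:
  assumes "1 \<le> l" "2 * l - 1 \<in># p" "\<And>x. x \<in># p \<Longrightarrow> odd x \<Longrightarrow> x < 2 * l"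
  shows "largest_odd_index p = l"
proof -
  have "\<exists>x\<in>#p. odd x" using assms(1,2) by (intro bexI[of _ "2 * l - 1"]) auto
  note largest = largest_odd_index[OF this]
  have "2 * largest_odd_index p - 1 < 2 * l" "2 * l - 1 < 2 * largest_odd_index p"
    using largest assms by auto
  then show ?thesis by linarith
qed

definition B_support :: "nat \<Rightarrow> nat \<Rightarrow> nat multiset set" where
  "B_support k n = {p. is_partition p n \<and> (\<exists>x\<in>#p. odd x) \<and>
     (\<forall>x\<in>#p. even x \<longrightarrow> count p x = 1 \<and> x \<in> even_window k (largest_odd_index p))}"

lemma B_set_eq: "B_set k ev n = {p \<in> B_support k n. even (size (filter_mset even p)) = ev}"
  by (auto simp: B_set_def B_support_def largest_odd_index_def mem_even_window Let_def)

lemma finite_B_support: "finite (B_support k n)"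
proof (rule finite_subset)
  show "B_support k n \<subseteq> partitions_from {1..n} n"
    by (auto simp: B_support_def is_partition_def partitions_from_def Suc_le_eq
        dest: member_le_sum_mset)
qed (auto intro: finite_partitions_from)

definition B_parts :: "nat \<Rightarrow> nat \<Rightarrow> nat set" where
  "B_parts k l = odd_below l \<union> even_window k l"

definition B_weight :: "nat \<Rightarrow> nat \<Rightarrow> nat \<Rightarrow> int" where
  "B_weight l a c = (if even a then sign_weight c else if a = 2 * l - 1 then of_bool (1 \<le> c) else 1)"

lemma finite_B_parts: "finite (B_parts k l)"
  by (simp add: B_parts_def finite_odd_below finite_even_window)

lemma zero_notin_B_parts: "0 \<notin> B_parts k l"
  by (auto simp: B_parts_def mem_odd_below mem_even_window)

lemma B_parts_disjoint: "odd_below l \<inter> even_window k l = {}"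
  by (auto simp: mem_odd_below mem_even_window)

lemma B_support_fiber:
  assumes "p \<in> B_support k n" "largest_odd_index p = l"
  shows "p \<in> partitions_from (B_parts k l) n"
    and "(\<Prod>a\<in>B_parts k l. B_weight l a (count p a)) = (- 1) ^ size (filter_mset even p)"
proof -
  have part: "is_partition p n" and odd: "\<exists>x\<in>#p. odd x"
    and even: "\<And>x. x \<in># p \<Longrightarrow> even x \<Longrightarrow> count p x = 1 \<and> x \<in> even_window k l"
    using assms by (auto simp: B_support_def)
  note largest = largest_odd_index[OF odd, unfolded assms(2)]
  have parts: "set_mset p \<subseteq> B_parts k l"
  proof
    fix x assume "x \<in># p"
    then show "x \<in> B_parts k l"
      using even[of x] largest(3)[of x] by (cases "even x") (auto simp: B_parts_def mem_odd_below)
  qed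
  then show "p \<in> partitions_from (B_parts k l) n"
    using part by (simp add: partitions_from_def is_partition_def)
  have odd_factor: "(\<Prod>a\<in>odd_below l. B_weight l a (count p a)) = 1"
    using largest(2) by (intro prod.neutral) (auto simp: B_weight_def mem_odd_below Suc_le_eq)
  have "(\<Prod>a\<in>even_window k l. B_weight l a (count p a))
      = (\<Prod>a\<in>even_window k l. sign_weight (count p a))"
    by (intro prod.cong refl) (simp add: B_weight_def mem_even_window)
  also have "\<dots> = (- 1) ^ size (filter_mset (\<lambda>x. x \<in> even_window k l) p)"
    using even by (intro prod_sign_weight_count finite_even_window) (auto simp: mem_even_window)
  also have "filter_mset (\<lambda>x. x \<in> even_window k l) p = filter_mset even p"
    using even by (intro filter_mset_cong0) (auto simp: mem_even_window)
  finally show "(\<Prod>a\<in>B_parts k l. B_weight l a (count p a)) = (- 1) ^ size (filter_mset even p)"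
    unfolding B_parts_def
    by (simp add: prod.union_disjoint B_parts_disjoint finite_odd_below finite_even_window odd_factor)
qed

lemma B_support_fiberI:
  assumes "1 \<le> l" "p \<in> partitions_from (B_parts k l) n"
    and "(\<Prod>a\<in>B_parts k l. B_weight l a (count p a)) \<noteq> 0"
  shows "p \<in> B_support k n" "largest_odd_index p = l"
proof -
  have parts: "set_mset p \<subseteq> B_parts k l" and sum_p: "sum_mset p = n"
    using assms(2) by (auto simp: partitions_from_def)
  have nonzero: "B_weight l a (count p a) \<noteq> 0" if "a \<in> B_parts k l" for a
    using assms(3) that finite_B_parts by auto
  have "2 * l - 1 \<in> B_parts k l"
    using assms(1) by (auto simp: B_parts_def mem_odd_below)
  then have top: "2 * l - 1 \<in># p"
    using nonzero[of "2 * l - 1"] assms(1) by (auto simp: B_weight_def not_in_iff split: if_splits)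
  show "largest_odd_index p = l"
    using assms(1) top parts
    by (intro largest_odd_index_eqI) (auto simp: B_parts_def mem_odd_below mem_even_window)
  moreover have "count p x = 1 \<and> x \<in> even_window k l" if "x \<in># p" "even x" for x
  proof -
    have "x \<in> even_window k l" "x \<in> B_parts k l"
      using that parts by (auto simp: B_parts_def mem_odd_below)
    then show ?thesis
      using nonzero[of x] that by (auto simp: B_weight_def sign_weight_def count_eq_zero_iff split: if_splits)
  qed
  moreover have "is_partition p n"
    using parts sum_p zero_notin_B_parts by (auto simp: is_partition_def intro!: gr0I)
  ultimately show "p \<in> B_support k n"
    using top assms(1) by (auto simp: B_support_def intro!: bexI[of _ "2 * l - 1"])
qed

lemma prod_B_weight_series_odd:
  assumes "1 \<le> l"
  shows "(\<Prod>a\<in>odd_below l. weight_series (B_weight l a) a) = q ^ (2 * l - 1) * odd_parts_series l"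
proof -
  obtain l' where l: "l = Suc l'" using assms by (cases l) auto
  have "(\<Prod>i<l'. weight_series (B_weight l (2 * i + 1)) (2 * i + 1)) = odd_parts_series l'"
    unfolding odd_parts_series_def
  proof (intro prod.cong refl)
    fix i assume "i \<in> {..<l'}"
    then have "B_weight l (2 * i + 1) = (\<lambda>_. 1)"
      by (auto simp: B_weight_def l fun_eq_iff)
    then show "weight_series (B_weight l (2 * i + 1)) (2 * i + 1) = weight_series (\<lambda>_. 1) (2 * i + 1)"
      by (simp only:)
  qed
  moreover have "B_weight l (2 * l' + 1) = (\<lambda>c. of_bool (1 \<le> c))"
    by (auto simp: B_weight_def l fun_eq_iff)
  ultimately have "(\<Prod>i<Suc l'. weight_series (B_weight l (2 * i + 1)) (2 * i + 1))
      = odd_parts_series l' * (q ^ (2 * l' + 1) * weight_series (\<lambda>_. 1) (2 * l' + 1))"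
    using weight_series_at_least_one[of "2 * l' + 1", where 'a = int] by (simp add: prod.lessThan_Suc)
  also have "\<dots> = q ^ (2 * l - 1) * odd_parts_series l"
    by (simp add: odd_parts_series_def l mult_ac)
  finally show ?thesis
    unfolding odd_below_def l by (subst prod.reindex) (auto simp: inj_on_def)
qed

lemma prod_B_weight_series:
  assumes "1 \<le> l"
  shows "(\<Prod>a\<in>B_parts k l. weight_series (B_weight l a) a)
       = q ^ (2 * l - 1) * odd_parts_series l * even_prod (k - 1) (Suc l)"
proof -
  have "(\<Prod>a\<in>even_window k l. weight_series (B_weight l a) a) = even_prod (k - 1) (Suc l)"
    by (subst prod_weight_series_even_window[symmetric], intro prod.cong refl)
       (auto simp: B_weight_def[abs_def] mem_even_window)
  then show ?thesis
    unfolding B_parts_def using prod_B_weight_series_odd[OF assms]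
    by (simp add: prod.union_disjoint B_parts_disjoint finite_odd_below finite_even_window)
qed

lemma sum_B_support_fiber:
  assumes "1 \<le> l"
  shows "(\<Sum>p\<in>{p \<in> B_support k n. largest_odd_index p = l}. (- 1) ^ size (filter_mset even p))
       = (q ^ (2 * l - 1) * odd_parts_series l * even_prod (k - 1) (Suc l)) $ n"
proof -
  have "(\<Sum>p\<in>{p \<in> B_support k n. largest_odd_index p = l}. (- 1) ^ size (filter_mset even p))
      = (\<Sum>p\<in>partitions_from (B_parts k l) n. \<Prod>a\<in>B_parts k l. B_weight l a (count p a))"
  proof (rule sum.mono_neutral_cong_left)
    show "finite (partitions_from (B_parts k l) n)"
      by (rule finite_partitions_from[OF finite_B_parts zero_notin_B_parts])
    show "{p \<in> B_support k n. largest_odd_index p = l} \<subseteq> partitions_from (B_parts k l) n"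
      using B_support_fiber(1) by blast
    show "\<forall>p\<in>partitions_from (B_parts k l) n - {p \<in> B_support k n. largest_odd_index p = l}.
        (\<Prod>a\<in>B_parts k l. B_weight l a (count p a)) = 0"
      using B_support_fiberI[OF assms] by blast
    show "(- 1) ^ size (filter_mset even p) = (\<Prod>a\<in>B_parts k l. B_weight l a (count p a))"
      if "p \<in> {p \<in> B_support k n. largest_odd_index p = l}" for p
    proof -
      have "p \<in> B_support k n" "largest_odd_index p = l" using that by auto
      then show ?thesis by (rule B_support_fiber(2)[symmetric])
    qed
  qed
  also have "\<dots> = (\<Prod>a\<in>B_parts k l. weight_series (B_weight l a) a) $ n"
    by (rule sum_partitions_from_eq_nth_prod_weight_series[OF finite_B_parts zero_notin_B_parts])
  finally show ?thesis
    using prod_B_weight_series[OF assms] by simp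
qed

theorem B_diff_eq_nth_C_series: "int (B_e k n) - int (B_o k n) = C_series k (Suc n) $ Suc n"
proof -
  have "int (B_e k n) - int (B_o k n) = (\<Sum>p\<in>B_support k n. (- 1) ^ size (filter_mset even p))"
    unfolding B_e_def B_o_def B_set_eq by (simp add: card_even_minus_card_odd finite_B_support)
  also have "\<dots> = (\<Sum>l=1..Suc n.
      \<Sum>p\<in>{p \<in> B_support k n. largest_odd_index p = l}. (- 1) ^ size (filter_mset even p))"
  proof (rule sum.group[symmetric])
    show "largest_odd_index ` B_support k n \<subseteq> {1..Suc n}"
    proof clarify
      fix p assume "p \<in> B_support k n"
      then have "\<exists>x\<in>#p. odd x" "sum_mset p = n"
        by (auto simp: B_support_def is_partition_def)
      then show "largest_odd_index p \<in> {1..Suc n}"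
        using largest_odd_index member_le_sum_mset by fastforce
    qed
  qed (auto simp: finite_B_support)
  also have "\<dots> = (\<Sum>l=1..Suc n. (q ^ (2 * l - 1) * odd_parts_series l * even_prod (k - 1) (Suc l)) $ n)"
    by (intro sum.cong refl sum_B_support_fiber) auto
  also have "\<dots> = C_series k (Suc n) $ Suc n"
    unfolding C_series_def fps_sum_nth
  proof (intro sum.cong refl)
    fix l :: nat assume "l \<in> {1..Suc n}"
    then have shift: "q ^ (2 * l) * even_prod (k - 1) (Suc l) * odd_parts_series l
        = q * (q ^ (2 * l - 1) * odd_parts_series l * even_prod (k - 1) (Suc l))"
      by (cases l) (simp_all add: mult_ac)
    show "(q ^ (2 * l - 1) * odd_parts_series l * even_prod (k - 1) (Suc l)) $ n
        = (q ^ (2 * l) * even_prod (k - 1) (Suc l) * odd_parts_series l) $ Suc n"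
      by (simp only: shift fps_X_mult_nth) simp
  qed
  finally show ?thesis .
qed

definition C_support :: "nat \<Rightarrow> nat \<Rightarrow> (nat multiset \<times> nat) set" where
  "C_support k N = {(p, l). 1 \<le> l \<and> is_partition p N \<and> 2 * l \<in># p \<and>
     (\<forall>x\<in>#p. x \<le> l \<longrightarrow> count p x = 1) \<and>
     (\<forall>x\<in>#p. 2 * l < x \<longrightarrow> count p x = 1 \<and> x \<in> even_window k l)}"

abbreviation large_parts :: "nat multiset \<times> nat \<Rightarrow> nat" where
  "large_parts \<equiv> \<lambda>(p, l). size (filter_mset (\<lambda>x. 2 * l < x) p)"

lemma C_set_eq: "C_set k ev N = {x \<in> C_support k N. even (large_parts x) = ev}"
  by (auto simp: C_set_def C_support_def mem_even_window)

lemma C_support_bound: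
  assumes "(p, l) \<in> C_support k N"
  shows "l \<in> {1..N}" "p \<in> partitions_from {1..N} N"
proof -
  have "1 \<le> l" and part: "is_partition p N" and "2 * l \<in># p"
    using assms by (auto simp: C_support_def)
  then show "l \<in> {1..N}"
    using member_le_sum_mset[of "2 * l" p] by (auto simp: is_partition_def)
  have "x \<in> {1..N}" if "x \<in># p" for x
    using that part member_le_sum_mset[of x p] by (auto simp: is_partition_def Suc_le_eq)
  with part show "p \<in> partitions_from {1..N} N"
    by (auto simp: partitions_from_def is_partition_def)
qed

lemma finite_C_support: "finite (C_support k N)"
proof (rule finite_subset)
  show "C_support k N \<subseteq> partitions_from {1..N} N \<times> {1..N}"
    using C_support_bound by fast
  show "finite (partitions_from {1..N} N \<times> {1..N})"
    by (intro finite_cartesian_product finite_partitions_from) auto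
qed

definition C_parts :: "nat \<Rightarrow> nat \<Rightarrow> nat set" where
  "C_parts k l = {1..l} \<union> ({Suc l..2 * l} \<union> even_window k l)"

definition C_weight :: "nat \<Rightarrow> nat \<Rightarrow> nat \<Rightarrow> int" where
  "C_weight l a c = (if a \<le> l then of_bool (c \<le> 1) else if a < 2 * l then 1
     else if a = 2 * l then of_bool (1 \<le> c) else sign_weight c)"

lemma finite_C_parts: "finite (C_parts k l)"
  by (simp add: C_parts_def finite_even_window)

lemma zero_notin_C_parts: "0 \<notin> C_parts k l"
  by (auto simp: C_parts_def mem_even_window)

lemma prod_C_parts:
  "(\<Prod>a\<in>C_parts k l. f a)
     = (\<Prod>a\<in>{1..l}. f a) * (\<Prod>a\<in>{Suc l..2 * l}. f a) * (\<Prod>a\<in>even_window k l. f a)"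
proof -
  have "{Suc l..2 * l} \<inter> even_window k l = {}" "{1..l} \<inter> ({Suc l..2 * l} \<union> even_window k l) = {}"
    by (auto simp: mem_even_window)
  then show ?thesis
    unfolding C_parts_def by (simp add: prod.union_disjoint finite_even_window mult.assoc)
qed

lemma C_support_fiber:
  assumes "(p, l) \<in> C_support k N"
  shows "p \<in> partitions_from (C_parts k l) N"
    and "(\<Prod>a\<in>C_parts k l. C_weight l a (count p a)) = (- 1) ^ large_parts (p, l)"
proof -
  have "1 \<le> l" and part: "is_partition p N" and top: "2 * l \<in># p"
    and small: "\<And>x. x \<in># p \<Longrightarrow> x \<le> l \<Longrightarrow> count p x = 1"
    and large: "\<And>x. x \<in># p \<Longrightarrow> 2 * l < x \<Longrightarrow> count p x = 1 \<and> x \<in> even_window k l"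
    using assms by (auto simp: C_support_def)
  have parts: "set_mset p \<subseteq> C_parts k l"
  proof
    fix x assume "x \<in># p"
    then show "x \<in> C_parts k l"
      using part large[of x] by (cases "2 * l < x") (auto simp: C_parts_def is_partition_def)
  qed
  then show "p \<in> partitions_from (C_parts k l) N"
    using part by (simp add: partitions_from_def is_partition_def)
  have small_factor: "(\<Prod>a\<in>{1..l}. C_weight l a (count p a)) = 1"
  proof (intro prod.neutral ballI)
    fix a assume "a \<in> {1..l}"
    moreover from this have "count p a \<le> 1"
      using small[of a] by (cases "a \<in># p") (auto simp: not_in_iff)
    ultimately show "C_weight l a (count p a) = 1"
      by (simp add: C_weight_def)
  qed
  have middle_factor: "(\<Prod>a\<in>{Suc l..2 * l}. C_weight l a (count p a)) = 1"
    using top by (intro prod.neutral ballI) (auto simp: C_weight_def Suc_le_eq)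
  have "(\<Prod>a\<in>even_window k l. C_weight l a (count p a))
      = (\<Prod>a\<in>even_window k l. sign_weight (count p a))"
    by (intro prod.cong refl) (simp add: C_weight_def mem_even_window)
  also have "\<dots> = (- 1) ^ size (filter_mset (\<lambda>x. x \<in> even_window k l) p)"
    using large by (intro prod_sign_weight_count finite_even_window) (auto simp: mem_even_window)
  also have "filter_mset (\<lambda>x. x \<in> even_window k l) p = filter_mset (\<lambda>x. 2 * l < x) p"
    using large by (intro filter_mset_cong0) (auto simp: mem_even_window)
  finally show "(\<Prod>a\<in>C_parts k l. C_weight l a (count p a)) = (- 1) ^ large_parts (p, l)"
    unfolding prod_C_parts small_factor middle_factor by simp
qed

lemma C_support_fiberI:
  assumes "1 \<le> l" "p \<in> partitions_from (C_parts k l) N"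
    and "(\<Prod>a\<in>C_parts k l. C_weight l a (count p a)) \<noteq> 0"
  shows "(p, l) \<in> C_support k N"
proof -
  have parts: "set_mset p \<subseteq> C_parts k l" and sum_p: "sum_mset p = N"
    using assms(2) by (auto simp: partitions_from_def)
  have nonzero: "C_weight l a (count p a) \<noteq> 0" if "a \<in> C_parts k l" for a
    using assms(3) that finite_C_parts by auto
  have "2 * l \<in> C_parts k l"
    using assms(1) by (auto simp: C_parts_def)
  then have top: "2 * l \<in># p"
    using nonzero[of "2 * l"] assms(1) by (auto simp: C_weight_def not_in_iff split: if_splits)
  have "count p x = 1" if "x \<in># p" "x \<le> l" for x
  proof -
    have "x \<in> C_parts k l" using that parts by auto
    then have "count p x \<le> 1"
      using nonzero[of x] that(2) by (auto simp: C_weight_def split: if_splits)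
    moreover have "0 < count p x" using that(1) by simp
    ultimately show ?thesis by linarith
  qed
  moreover have "count p x = 1 \<and> x \<in> even_window k l" if "x \<in># p" "2 * l < x" for x
    using that parts nonzero[of x]
    by (auto simp: C_parts_def C_weight_def sign_weight_def count_eq_zero_iff split: if_splits)
  moreover have "is_partition p N"
    using parts sum_p zero_notin_C_parts by (auto simp: is_partition_def intro!: gr0I)
  ultimately show ?thesis
    using assms(1) top by (auto simp: C_support_def)
qed

lemma prod_C_weight_series_small:
  "(\<Prod>a\<in>{1..l}. weight_series (C_weight l a) a) = one_plus_prod 0 l"
proof -
  have "(\<Prod>a\<in>{1..l}. weight_series (C_weight l a) a) = (\<Prod>a\<in>{1..l}. 1 + q ^ a)"
  proof (intro prod.cong refl)
    fix a assume "a \<in> {1..l}"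
    moreover from this have "C_weight l a = (\<lambda>c. of_bool (c \<le> 1))"
      by (auto simp: C_weight_def fun_eq_iff)
    ultimately show "weight_series (C_weight l a) a = 1 + q ^ a"
      using weight_series_at_most_one[of a, where 'a = int] by simp
  qed
  then show ?thesis
    by (simp add: one_plus_prod_def)
qed

lemma prod_C_weight_series_middle:
  assumes "1 \<le> l"
  shows "(\<Prod>a\<in>{Suc l..2 * l}. weight_series (C_weight l a) a)
       = q ^ (2 * l) * (\<Prod>a\<in>{Suc l..2 * l}. weight_series (\<lambda>_. 1) a)"
proof -
  have "(\<Prod>a\<in>{Suc l..2 * l}. weight_series (C_weight l a) a)
      = (\<Prod>a\<in>{Suc l..2 * l}. (if a = 2 * l then q ^ (2 * l) else 1) * weight_series (\<lambda>_. 1) a)"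
  proof (intro prod.cong refl)
    fix a assume a: "a \<in> {Suc l..2 * l}"
    show "weight_series (C_weight l a) a = (if a = 2 * l then q ^ (2 * l) else 1) * weight_series (\<lambda>_. 1) a"
    proof (cases "a = 2 * l")
      case True
      then have "C_weight l a = (\<lambda>c. of_bool (1 \<le> c))"
        using assms by (auto simp: C_weight_def fun_eq_iff)
      then show ?thesis
        using True assms weight_series_at_least_one[of a, where 'a = int] by simp
    next
      case False
      then have "C_weight l a = (\<lambda>_. 1)"
        using a by (auto simp: C_weight_def fun_eq_iff)
      then show ?thesis using False by simp
    qed
  qed
  also have "\<dots> = q ^ (2 * l) * (\<Prod>a\<in>{Suc l..2 * l}. weight_series (\<lambda>_. 1) a)"
    using assms by (simp add: prod.distrib prod.delta)
  finally show ?thesis .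
qed

lemma prod_C_weight_series:
  assumes "1 \<le> l"
  shows "(\<Prod>a\<in>C_parts k l. weight_series (C_weight l a) a)
       = q ^ (2 * l) * even_prod (k - 1) (Suc l) * odd_parts_series l"
proof -
  have "(\<Prod>a\<in>even_window k l. weight_series (C_weight l a) a) = even_prod (k - 1) (Suc l)"
    by (subst prod_weight_series_even_window[symmetric], intro prod.cong refl)
       (auto simp: C_weight_def[abs_def] mem_even_window)
  then have "(\<Prod>a\<in>C_parts k l. weight_series (C_weight l a) a)
      = q ^ (2 * l) * even_prod (k - 1) (Suc l)
        * (one_plus_prod 0 l * (\<Prod>a\<in>{Suc l..2 * l}. weight_series (\<lambda>_. 1) a))"
    unfolding prod_C_parts prod_C_weight_series_small prod_C_weight_series_middle[OF assms]
    by (simp only: mult_ac)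
  then show ?thesis
    by (simp only: odd_parts_series_eq)
qed

lemma sum_C_support_fiber:
  assumes "1 \<le> l"
  shows "(\<Sum>p\<in>{p. (p, l) \<in> C_support k N}. (- 1) ^ large_parts (p, l))
       = (q ^ (2 * l) * even_prod (k - 1) (Suc l) * odd_parts_series l) $ N"
proof -
  have "(\<Sum>p\<in>{p. (p, l) \<in> C_support k N}. (- 1) ^ large_parts (p, l))
      = (\<Sum>p\<in>partitions_from (C_parts k l) N. \<Prod>a\<in>C_parts k l. C_weight l a (count p a))"
  proof (rule sum.mono_neutral_cong_left)
    show "finite (partitions_from (C_parts k l) N)"
      by (rule finite_partitions_from[OF finite_C_parts zero_notin_C_parts])
    show "{p. (p, l) \<in> C_support k N} \<subseteq> partitions_from (C_parts k l) N"
      using C_support_fiber(1) by blast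
    show "\<forall>p\<in>partitions_from (C_parts k l) N - {p. (p, l) \<in> C_support k N}.
        (\<Prod>a\<in>C_parts k l. C_weight l a (count p a)) = 0"
      using C_support_fiberI[OF assms] by blast
    show "(- 1) ^ large_parts (p, l) = (\<Prod>a\<in>C_parts k l. C_weight l a (count p a))"
      if "p \<in> {p. (p, l) \<in> C_support k N}" for p
      using that by (simp add: C_support_fiber(2))
  qed
  also have "\<dots> = (\<Prod>a\<in>C_parts k l. weight_series (C_weight l a) a) $ N"
    by (rule sum_partitions_from_eq_nth_prod_weight_series[OF finite_C_parts zero_notin_C_parts])
  finally show ?thesis
    using prod_C_weight_series[OF assms] by simp
qed

theorem C_diff_eq_nth_C_series: "int (C_e k N) - int (C_o k N) = C_series k N $ N"
proof -
  have "int (C_e k N) - int (C_o k N) = (\<Sum>x\<in>C_support k N. (- 1) ^ large_parts x)"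
    unfolding C_e_def C_o_def C_set_eq by (simp add: card_even_minus_card_odd finite_C_support)
  also have "\<dots> = (\<Sum>l=1..N. \<Sum>x\<in>{x \<in> C_support k N. snd x = l}. (- 1) ^ large_parts x)"
    by (rule sum.group[symmetric]) (use C_support_bound in \<open>auto simp: finite_C_support\<close>)
  also have "\<dots> = (\<Sum>l=1..N. \<Sum>p\<in>{p. (p, l) \<in> C_support k N}. (- 1) ^ large_parts (p, l))"
  proof (intro sum.cong refl)
    fix l
    have "{x \<in> C_support k N. snd x = l} = (\<lambda>p. (p, l)) ` {p. (p, l) \<in> C_support k N}"
      by force
    then show "(\<Sum>x\<in>{x \<in> C_support k N. snd x = l}. (- 1) ^ large_parts x)
        = (\<Sum>p\<in>{p. (p, l) \<in> C_support k N}. (- 1) ^ large_parts (p, l))"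
      by (simp add: sum.reindex inj_on_def)
  qed
  also have "\<dots> = C_series k N $ N"
    unfolding C_series_def fps_sum_nth by (intro sum.cong refl sum_C_support_fiber) auto
  finally show ?thesis .
qed

theorem theorem3:
  fixes k n :: nat
  assumes "1 \<le> k"
    and "2 ^ (k - 1) * k * (2 * k - 1) \<le> n"
  shows "int (B_e k n) - int (B_o k n) = int (C_e k (n + 1)) - int (C_o k (n + 1))
       \<and> 2 * (int (C_e k (n + 1)) - int (C_o k (n + 1))) = int (D (2 * k) (n + 1))"
proof
  show "int (B_e k n) - int (B_o k n) = int (C_e k (n + 1)) - int (C_o k (n + 1))"
    by (simp add: B_diff_eq_nth_C_series C_diff_eq_nth_C_series)
next
  have "k * (2 * k - 1) \<le> 2 ^ (k - 1) * k * (2 * k - 1)"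
    by simp
  then have "k * (2 * k - 1) < n + 1"
    using assms(2) by linarith
  then show "2 * (int (C_e k (n + 1)) - int (C_o k (n + 1))) = int (D (2 * k) (n + 1))"
    using assms(1)
    by (simp add: C_diff_eq_nth_C_series D_eq_nth_D_series two_nth_C_series_eq_nth_D_series)
qed

end
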